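(* Let $p\ge1$ be an integer and run the $p$-Pass algorithm with arbitrary orderings of $V$ in each pass. Then its output $S_p$ satisfies $|S_p|\le k$ and $f(S_p)\ge\big(1-(\tfrac{p}{p+1})^p\big)\mathrm{OPT}$.
   Context: $V$ is a finite ground set with $|V|=n$; $f:2^V\to\mathbb{R}_{\ge0}$ is monotone, submodular and normalized; $f(e\mid Y)=f(Y\cup\{e\})-f(Y)$. $k\le n$ is a positive integer and $\mathrm{OPT}=\max\{f(S):S\subseteq V,|S|\le k\}$. $p$-Pass algorithm (knows $\mathrm{OPT}$): start with $S=\emptyset$; for $i=1,\dots,p$, make a pass over all elements of $V$ (in some order) and add each element $e$ to $S$ if $|S|<k$ and $f(e\mid S)\ge(\frac{p}{p+1})^i\cdot\frac{\mathrm{OPT}}{k}$; return $S$. $S_i$ denotes the set $S$ after the $i$-th pass. *)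

theory Defs
  imports Main "HOL.Real"
begin

definition normalized_on :: "'a set \<Rightarrow> ('a set \<Rightarrow> real) \<Rightarrow> bool" where
  "normalized_on V f \<longleftrightarrow> f {} = 0"

definition nonneg_on :: "'a set \<Rightarrow> ('a set \<Rightarrow> real) \<Rightarrow> bool" where
  "nonneg_on V f \<longleftrightarrow> (\<forall>A. A \<subseteq> V \<longrightarrow> f A \<ge> 0)"

definition monotone_on_sets :: "'a set \<Rightarrow> ('a set \<Rightarrow> real) \<Rightarrow> bool" where
  "monotone_on_sets V f \<longleftrightarrow> (\<forall>A B. A \<subseteq> B \<and> B \<subseteq> V \<longrightarrow> f A \<le> f B)"

definition submodular_on :: "'a set \<Rightarrow> ('a set \<Rightarrow> real) \<Rightarrow> bool" where
  "submodular_on V f \<longleftrightarrow>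
     (\<forall>A B. A \<subseteq> V \<and> B \<subseteq> V \<longrightarrow> f (A \<union> B) + f (A \<inter> B) \<le> f A + f B)"

definition marg :: "('a set \<Rightarrow> real) \<Rightarrow> 'a \<Rightarrow> 'a set \<Rightarrow> real" where
  "marg f e Y = f (Y \<union> {e}) - f Y"

definition OPT :: "'a set \<Rightarrow> ('a set \<Rightarrow> real) \<Rightarrow> nat \<Rightarrow> real" where
  "OPT V f k = Max (f ` {S. S \<subseteq> V \<and> card S \<le> k})"

fun one_pass :: "('a set \<Rightarrow> real) \<Rightarrow> nat \<Rightarrow> real \<Rightarrow> 'a set \<Rightarrow> 'a list \<Rightarrow> 'a set" where
  "one_pass f k tau S [] = S"
| "one_pass f k tau S (e # es) =
     one_pass f k tau (if card S < k \<and> marg f e S \<ge> tau then insert e S else S) es"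

text \<open>State S_i after the i-th pass of the p-Pass algorithm; sigma i is the ordering
  of V used in pass i; opt is the (known) value OPT.\<close>
fun p_pass_state :: "('a set \<Rightarrow> real) \<Rightarrow> nat \<Rightarrow> nat \<Rightarrow> real \<Rightarrow> (nat \<Rightarrow> 'a list) \<Rightarrow> nat \<Rightarrow> 'a set" where
  "p_pass_state f k p opt sigma 0 = {}"
| "p_pass_state f k p opt sigma (Suc i) =
     one_pass f k ((real p / (real p + 1)) ^ Suc i * opt / real k)
       (p_pass_state f k p opt sigma i) (sigma (Suc i))"

end

theory Submission
  imports Defs
begin

text \<open>A pass with threshold \<open>\<tau>\<close> only adds elements of gain at least \<open>\<tau>\<close>, so it
  preserves \<open>c + \<tau> |S| \<le> f S\<close>. With \<open>q = p/(p+1)\<close> and thresholds \<open>\<tau>\<^sub>j = q\<^sup>j OPT/k\<close>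
  this gives, by induction on the passes, \<open>f(S\<^sub>j) \<ge> (1 - q\<^sup>j) OPT + q\<^sup>j OPT (|S\<^sub>j|/k - j/p)\<close>:
  when \<open>|S\<^sub>j| \<ge> jk/p\<close> the step is the identity \<open>q/p = 1 - q\<close>; otherwise \<open>S\<^sub>j\<close> is not
  full, so every element skipped in pass \<open>j\<close> had gain below \<open>\<tau>\<^sub>j\<close>, and by submodularity
  adding an optimal set to \<open>S\<^sub>j\<close> gains at most \<open>k \<tau>\<^sub>j\<close>, i.e. \<open>f(S\<^sub>j) \<ge> (1 - q\<^sup>j) OPT\<close>
  outright. For \<open>j = p\<close> either \<open>S\<^sub>p\<close> is full and the invariant gives the bound, or the second
  argument applies.\<close>

lemma marg_antimono:
  assumes "monotone_on_sets V f" and "submodular_on V f"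
    and "S \<subseteq> T" "T \<subseteq> V" "e \<in> V"
  shows "marg f e T \<le> marg f e S"
proof (cases "e \<in> T")
  case True
  then have "T \<union> {e} = T" by auto
  moreover have "f S \<le> f (S \<union> {e})"
    using assms(1,3-5) unfolding monotone_on_sets_def by blast
  ultimately show ?thesis unfolding marg_def by simp
next
  case False
  have "f ((S \<union> {e}) \<union> T) + f ((S \<union> {e}) \<inter> T) \<le> f (S \<union> {e}) + f T"
    using assms(2)[unfolded submodular_on_def, rule_format, of "S \<union> {e}" T] assms(3-5)
    by blast
  moreover have "(S \<union> {e}) \<inter> T = S" "(S \<union> {e}) \<union> T = T \<union> {e}"
    using False assms(3) by auto
  ultimately show ?thesis unfolding marg_def by simp
qed

lemma submodular_union_le_sum_marg:
  assumes "monotone_on_sets V f" and "submodular_on V f"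
    and "finite A" "A \<subseteq> V" "S \<subseteq> V"
  shows "f (S \<union> A) \<le> f S + (\<Sum>e\<in>A. marg f e S)"
  using assms(3,4)
proof (induction A rule: finite_induct)
  case empty
  then show ?case by simp
next
  case (insert a A)
  have "f (S \<union> insert a A) = f (S \<union> A) + marg f a (S \<union> A)"
    unfolding marg_def by (simp add: insert_absorb2)
  moreover have "marg f a (S \<union> A) \<le> marg f a S"
    using marg_antimono[OF assms(1,2), of S "S \<union> A" a] insert.prems assms(5) by auto
  moreover have "f (S \<union> A) \<le> f S + (\<Sum>e\<in>A. marg f e S)"
    using insert.IH insert.prems by simp
  ultimately show ?case
    using insert.hyps by simp
qed

lemma le_plus_card_mult_marg_bound:
  assumes "monotone_on_sets V f" and "submodular_on V f"
    and "finite V" "S \<subseteq> V" "T \<subseteq> V" "card T \<le> k" "0 \<le> \<tau>"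
    and "\<And>e. e \<in> V \<Longrightarrow> marg f e S \<le> \<tau>"
  shows "f T \<le> f S + real k * \<tau>"
proof -
  have "f T \<le> f (S \<union> T)"
    using assms(1,4,5) unfolding monotone_on_sets_def by auto
  also have "\<dots> \<le> f S + (\<Sum>e\<in>T. marg f e S)"
    using submodular_union_le_sum_marg[OF assms(1,2)] finite_subset assms(3-5) by blast
  also have "(\<Sum>e\<in>T. marg f e S) \<le> real (card T) * \<tau>"
    using sum_bounded_above[of T "\<lambda>e. marg f e S" \<tau>] assms(5,8) by auto
  also have "\<dots> \<le> real k * \<tau>"
    using assms(6,7) by (simp add: mult_right_mono)
  finally show ?thesis by simp
qed

lemma OPT_attained:
  assumes "finite V"
  obtains T where "T \<subseteq> V" "card T \<le> k" "f T = OPT V f k"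
proof -
  have "finite {T. T \<subseteq> V \<and> card T \<le> k}"
    using assms by simp
  then have "OPT V f k \<in> f ` {T. T \<subseteq> V \<and> card T \<le> k}"
    unfolding OPT_def by (intro Max_in) auto
  then show ?thesis using that by auto
qed

lemma OPT_nonneg:
  assumes "finite V" "normalized_on V f"
  shows "0 \<le> OPT V f k"
proof -
  have "finite {T. T \<subseteq> V \<and> card T \<le> k}"
    using assms by simp
  then have "f {} \<le> OPT V f k"
    unfolding OPT_def by (intro Max_ge) auto
  then show ?thesis
    using assms(2) unfolding normalized_on_def by simp
qed

lemma one_pass_superset: "S \<subseteq> one_pass f k \<tau> S es"
  by (induction es arbitrary: S) (auto, blast)

lemma one_pass_subset: "one_pass f k \<tau> S es \<subseteq> S \<union> set es"
proof (induction es arbitrary: S)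
  case Nil
  then show ?case by simp
next
  case (Cons e es)
  have "one_pass f k \<tau> S (e # es)
      \<subseteq> (if card S < k \<and> \<tau> \<le> marg f e S then insert e S else S) \<union> set es"
    using Cons.IH by simp
  then show ?case by auto
qed

lemma finite_one_pass: "finite S \<Longrightarrow> finite (one_pass f k \<tau> S es)"
  by (rule finite_subset[OF one_pass_subset]) simp

lemma card_one_pass_le: "finite S \<Longrightarrow> card S \<le> k \<Longrightarrow> card (one_pass f k \<tau> S es) \<le> k"
proof (induction es arbitrary: S)
  case Nil
  then show ?case by simp
next
  case (Cons e es)
  define S' where "S' = (if card S < k \<and> \<tau> \<le> marg f e S then insert e S else S)"
  have "finite S'" "card S' \<le> k"
    using Cons.prems unfolding S'_def by (auto simp: card_insert_if)
  from Cons.IH[OF this] show ?case unfolding S'_def by simp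
qed

lemma one_pass_gain:
  assumes "finite S" "c + \<tau> * real (card S) \<le> f S"
  shows "c + \<tau> * real (card (one_pass f k \<tau> S es)) \<le> f (one_pass f k \<tau> S es)"
  using assms
proof (induction es arbitrary: S)
  case Nil
  then show ?case by simp
next
  case (Cons e es)
  define S' where "S' = (if card S < k \<and> \<tau> \<le> marg f e S then insert e S else S)"
  have "c + \<tau> * real (card S') \<le> f S'"
  proof (cases "card S < k \<and> \<tau> \<le> marg f e S \<and> e \<notin> S")
    case True
    then have "f S' = f S + marg f e S" "card S' = card S + 1"
      using Cons.prems(1) unfolding S'_def marg_def by simp_all
    then show ?thesis using True Cons.prems(2) by (simp add: algebra_simps)
  next
    case False
    then have "S' = S" unfolding S'_def by auto
    then show ?thesis using Cons.prems(2) by simp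
  qed
  moreover have "finite S'" using Cons.prems(1) unfolding S'_def by simp
  ultimately have "c + \<tau> * real (card (one_pass f k \<tau> S' es)) \<le> f (one_pass f k \<tau> S' es)"
    using Cons.IH by blast
  then show ?case unfolding S'_def by simp
qed

lemma one_pass_rejected:
  assumes "finite S" "e \<in> set es" "e \<notin> one_pass f k \<tau> S es"
    and "card (one_pass f k \<tau> S es) < k"
  shows "\<exists>T \<subseteq> one_pass f k \<tau> S es. marg f e T < \<tau>"
  using assms
proof (induction es arbitrary: S)
  case Nil
  then show ?case by simp
next
  case (Cons e' es)
  define S' where "S' = (if card S < k \<and> \<tau> \<le> marg f e' S then insert e' S else S)"
  have result: "one_pass f k \<tau> S (e' # es) = one_pass f k \<tau> S' es"
    unfolding S'_def by simp
  have S'_sub: "S' \<subseteq> one_pass f k \<tau> S' es"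
    by (rule one_pass_superset)
  have "finite S'" using Cons.prems(1) unfolding S'_def by simp
  show ?case
  proof (cases "e' = e")
    case True
    then have "e \<notin> S'" using Cons.prems(3) S'_sub result by auto
    then have "S' = S" "\<not> (card S < k \<and> \<tau> \<le> marg f e S)"
      using True unfolding S'_def by (auto split: if_splits)
    moreover have "card S < k"
      using card_mono[OF finite_one_pass[OF \<open>finite S'\<close>] S'_sub] Cons.prems(4) result
        \<open>S' = S\<close> by simp
    ultimately show ?thesis using S'_sub result by auto
  next
    case False
    then have "e \<in> set es" using Cons.prems(2) by simp
    with Cons.IH[OF \<open>finite S'\<close>] Cons.prems(3,4) show ?thesis
      unfolding result by blast
  qed
qed

locale p_pass_run =
  fixes V :: "'a set" and f :: "'a set \<Rightarrow> real" and k p :: nat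
    and sigma :: "nat \<Rightarrow> 'a list"
  assumes finite_V: "finite V"
    and mono: "monotone_on_sets V f" and submod: "submodular_on V f"
    and normalized: "normalized_on V f"
    and k_pos: "0 < k" and p_pos: "1 \<le> p"
    and pass_set_eq: "\<And>i. i \<in> {1..p} \<Longrightarrow> set (sigma i) = V"
begin

abbreviation "Q \<equiv> OPT V f k"

abbreviation "state \<equiv> p_pass_state f k p Q sigma"

definition ratio :: real where "ratio = real p / (real p + 1)"

definition threshold :: "nat \<Rightarrow> real" where "threshold j = ratio ^ j * Q / real k"

lemma state_Suc:
  "state (Suc j) = one_pass f k (threshold (Suc j)) (state j) (sigma (Suc j))"
  by (simp add: threshold_def ratio_def)

lemma ratio_nonneg: "0 \<le> ratio" and ratio_le_1: "ratio \<le> 1"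
  unfolding ratio_def by simp_all

lemma ratio_div_p: "ratio / real p = 1 - ratio"
proof -
  have "0 < real p" using p_pos by simp
  then show ?thesis unfolding ratio_def by (simp add: divide_simps)
qed

lemma threshold_nonneg: "0 \<le> threshold j"
  using OPT_nonneg[OF finite_V normalized] unfolding threshold_def ratio_def by simp

lemma finite_state: "finite (state j)"
  by (induction j) (simp_all add: finite_one_pass)

lemma card_state_le: "card (state j) \<le> k"
  by (induction j) (simp_all add: card_one_pass_le finite_state)

lemma state_subset_V: "j \<le> p \<Longrightarrow> state j \<subseteq> V"
proof (induction j)
  case 0
  then show ?case by simp
next
  case (Suc j)
  then show ?case
    using one_pass_subset[of f k _ "state j" "sigma (Suc j)"] pass_set_eq[of "Suc j"]
    by (auto simp: state_Suc)
qed

lemma marg_state_le_threshold: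
  assumes "1 \<le> j" "j \<le> p" "card (state j) < k" "e \<in> V"
  shows "marg f e (state j) \<le> threshold j"
proof (cases "e \<in> state j")
  case True
  then have "state j \<union> {e} = state j" by auto
  then show ?thesis unfolding marg_def using threshold_nonneg by simp
next
  case False
  obtain i where j: "j = Suc i" using assms(1) by (cases j) auto
  have "e \<in> set (sigma j)" using pass_set_eq assms by auto
  then obtain T where "T \<subseteq> state j" "marg f e T < threshold j"
    using one_pass_rejected[OF finite_state, of e "sigma j" f k "threshold j" i] False assms(3)
    unfolding j state_Suc by blast
  moreover have "marg f e (state j) \<le> marg f e T"
    using marg_antimono[OF mono submod] calculation(1) state_subset_V assms(2,4) by blast
  ultimately show ?thesis by simp
qed

lemma unfilled_state_bound:
  assumes "1 \<le> j" "j \<le> p" "card (state j) < k"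
  shows "(1 - ratio ^ j) * Q \<le> f (state j)"
proof -
  obtain T where T: "T \<subseteq> V" "card T \<le> k" "f T = Q"
    using OPT_attained[OF finite_V] .
  have "Q \<le> f (state j) + real k * threshold j"
    using le_plus_card_mult_marg_bound[OF mono submod finite_V state_subset_V[OF assms(2)] T(1,2)
        threshold_nonneg] marg_state_le_threshold[OF assms] T(3) by simp
  moreover have "real k * threshold j = ratio ^ j * Q"
    using k_pos unfolding threshold_def by simp
  ultimately show ?thesis by (simp add: algebra_simps)
qed

definition lower_bound :: "nat \<Rightarrow> real \<Rightarrow> real" where
  "lower_bound j s = (1 - ratio ^ j) * Q + ratio ^ j * Q * (s / real k - real j / real p)"

lemma lower_bound_affine: "lower_bound j s = lower_bound j 0 + threshold j * s"
  unfolding lower_bound_def threshold_def by (simp add: algebra_simps)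

lemma lower_bound_Suc:
  "lower_bound (Suc j) s = (1 - ratio ^ j) * Q + ratio ^ Suc j * Q * (s / real k - real j / real p)"
proof -
  have "ratio ^ Suc j * Q / real p = ratio ^ j * Q * (ratio / real p)" by simp
  also have "\<dots> = ratio ^ j * Q - ratio ^ Suc j * Q"
    by (simp add: ratio_div_p algebra_simps)
  finally have "ratio ^ Suc j * Q / real p = ratio ^ j * Q - ratio ^ Suc j * Q" .
  moreover have "real (Suc j) / real p = real j / real p + 1 / real p"
    by (simp add: add_divide_distrib)
  ultimately show ?thesis
    unfolding lower_bound_def by (simp add: algebra_simps)
qed

lemma state_lower_bound: "j \<le> p \<Longrightarrow> lower_bound j (card (state j)) \<le> f (state j)"
proof (induction j)
  case 0
  then show ?case using normalized unfolding lower_bound_def normalized_on_def by simp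
next
  case (Suc j)
  define t where "t = real (card (state j)) / real k - real j / real p"
  have IH: "(1 - ratio ^ j) * Q + ratio ^ j * Q * t \<le> f (state j)"
    using Suc unfolding lower_bound_def t_def by simp
  have Q_nonneg: "0 \<le> Q" using OPT_nonneg[OF finite_V normalized] .
  have "lower_bound (Suc j) (card (state j)) \<le> f (state j)"
  proof (cases "0 \<le> t")
    case True
    have "ratio ^ Suc j * Q * t \<le> ratio ^ j * Q * t"
      using True Q_nonneg ratio_nonneg ratio_le_1
      by (intro mult_right_mono) (simp_all add: mult_left_le_one_le)
    then show ?thesis using IH unfolding lower_bound_Suc t_def by simp
  next
    case False
    then have "real (card (state j)) / real k < real j / real p"
      unfolding t_def by simp
    also have "\<dots> \<le> 1"
      using Suc.prems by simp
    finally have "real (card (state j)) / real k < 1" .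
    then have "card (state j) < k" using k_pos by (simp add: field_simps)
    moreover have "1 \<le> j" using False unfolding t_def by (cases j) auto
    ultimately have "(1 - ratio ^ j) * Q \<le> f (state j)"
      using unfilled_state_bound Suc.prems by simp
    moreover have "ratio ^ Suc j * Q * t \<le> 0"
      using False Q_nonneg ratio_nonneg by (simp add: mult_nonneg_nonpos)
    ultimately show ?thesis unfolding lower_bound_Suc t_def by simp
  qed
  then have "lower_bound (Suc j) 0 + threshold (Suc j) * real (card (state j)) \<le> f (state j)"
    by (subst (asm) lower_bound_affine)
  then have "lower_bound (Suc j) 0 + threshold (Suc j) * real (card (state (Suc j)))
      \<le> f (state (Suc j))"
    unfolding state_Suc by (rule one_pass_gain[OF finite_state])
  then show ?case by (subst lower_bound_affine)
qed

lemma p_pass_guarantee: "(1 - ratio ^ p) * Q \<le> f (state p)"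
proof (cases "card (state p) < k")
  case True
  then show ?thesis using unfilled_state_bound p_pos by simp
next
  case False
  then have "card (state p) = k" using card_state_le le_neq_implies_less by blast
  then show ?thesis
    using state_lower_bound[of p] k_pos p_pos unfolding lower_bound_def by simp
qed

end

theorem mainTheorem19:
  fixes V :: "'a set" and f :: "'a set \<Rightarrow> real" and k p :: nat
    and sigma :: "nat \<Rightarrow> 'a list"
  assumes "finite V"
    and "nonneg_on V f" and "monotone_on_sets V f" and "submodular_on V f"
    and "normalized_on V f"
    and "0 < k" and "k \<le> card V"
    and "1 \<le> p"
    and "\<forall>i \<in> {1..p}. distinct (sigma i) \<and> set (sigma i) = V"
  shows "card (p_pass_state f k p (OPT V f k) sigma p) \<le> k \<and>
         f (p_pass_state f k p (OPT V f k) sigma p)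
           \<ge> (1 - (real p / (real p + 1)) ^ p) * OPT V f k"
proof -
  interpret p_pass_run V f k p sigma
    using assms by unfold_locales auto
  show ?thesis
    using card_state_le p_pass_guarantee unfolding ratio_def by simp
qed

end
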